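(* Let $M$ be a Peano continuum with no cut points. Then: (1) every multivalent exact cut pair of $M$ is inseparable; (2) no cut pair of $M$ is separated by a multivalent exact cut pair, i.e., if $\{\sigma,\tau\}$ is a multivalent exact cut pair and $\{\zeta,\xi\}$ is any cut pair, then $\zeta$ and $\xi$ do not lie in distinct components of $M\setminus\{\sigma,\tau\}$.
   Context: A Peano continuum is a compact, connected, locally connected metrizable space. A cut point is $\eta$ with $M\setminus\{\eta\}$ disconnected. A cut pair is a set of two distinct points, neither a cut point, whose complement is disconnected. For a point $\zeta$ with $M\setminus\{\zeta\}$ connected, its valence is the number of ends of $M\setminus\{\zeta\}$. A cut pair $\{\zeta,\xi\}$ is exact if the valences of $\zeta$ and $\xi$ both equal $n$, where $n$ is the number of components of $M\setminus\{\zeta,\xi\}$; it is multivalent if this common valence is finite and at least $3$. An exact cut pair $\{\zeta,\xi\}$ is inseparable if $\zeta$ and $\xi$ do not lie in distinct components of the complement of any other exact cut pair. *)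

theory Defs
  imports "HOL-Analysis.Analysis" "HOL-Library.Extended_Nat"
begin

text \<open>A Peano continuum: a nonempty compact, connected, locally connected subset of a
metric space (metrizable spaces are exactly those homeomorphic to such subsets).\<close>
definition peano_continuum :: "'a::metric_space set \<Rightarrow> bool" where
  "peano_continuum M \<longleftrightarrow> M \<noteq> {} \<and> compact M \<and> connected M \<and> locally connected M"

definition cut_point :: "'a::metric_space set \<Rightarrow> 'a \<Rightarrow> bool" where
  "cut_point M \<eta> \<longleftrightarrow> \<eta> \<in> M \<and> \<not> connected (M - {\<eta>})"

definition cut_pair :: "'a::metric_space set \<Rightarrow> 'a \<Rightarrow> 'a \<Rightarrow> bool" where
  "cut_pair M \<zeta> \<xi> \<longleftrightarrow> \<zeta> \<in> M \<and> \<xi> \<in> M \<and> \<zeta> \<noteq> \<xi> \<and>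
     \<not> cut_point M \<zeta> \<and> \<not> cut_point M \<xi> \<and> \<not> connected (M - {\<zeta>, \<xi>})"

definition num_components :: "'a::topological_space set \<Rightarrow> enat" where
  "num_components S = (if finite (components S) then enat (card (components S)) else \<infinity>)"

definition num_ends :: "'a::metric_space set \<Rightarrow> enat" where
  "num_ends X = Sup {enat (card F) | K F. compact K \<and> K \<subseteq> X \<and> finite F \<and>
      F \<subseteq> {C \<in> components (X - K). \<not> compact (X \<inter> closure C)}}"

text \<open>Valence of a point \<zeta> (meaningful when M - {\<zeta>} is connected).\<close>
definition valence :: "'a::metric_space set \<Rightarrow> 'a \<Rightarrow> enat" where
  "valence M \<zeta> = num_ends (M - {\<zeta>})"

definition exact_cut_pair :: "'a::metric_space set \<Rightarrow> 'a \<Rightarrow> 'a \<Rightarrow> bool" where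
  "exact_cut_pair M \<zeta> \<xi> \<longleftrightarrow> cut_pair M \<zeta> \<xi> \<and>
     valence M \<zeta> = num_components (M - {\<zeta>, \<xi>}) \<and>
     valence M \<xi> = num_components (M - {\<zeta>, \<xi>})"

definition multivalent_exact_cut_pair :: "'a::metric_space set \<Rightarrow> 'a \<Rightarrow> 'a \<Rightarrow> bool" where
  "multivalent_exact_cut_pair M \<zeta> \<xi> \<longleftrightarrow> exact_cut_pair M \<zeta> \<xi> \<and>
     valence M \<zeta> \<noteq> \<infinity> \<and> valence M \<zeta> \<ge> 3"

definition separates :: "'a::metric_space set \<Rightarrow> 'a \<Rightarrow> 'a \<Rightarrow> 'a \<Rightarrow> 'a \<Rightarrow> bool" where
  "separates M \<sigma> \<tau> \<zeta> \<xi> \<longleftrightarrow> \<zeta> \<in> M - {\<sigma>, \<tau>} \<and> \<xi> \<in> M - {\<sigma>, \<tau>} \<and>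
     connected_component_set (M - {\<sigma>, \<tau>}) \<zeta> \<noteq> connected_component_set (M - {\<sigma>, \<tau>}) \<xi>"

definition inseparable :: "'a::metric_space set \<Rightarrow> 'a \<Rightarrow> 'a \<Rightarrow> bool" where
  "inseparable M \<zeta> \<xi> \<longleftrightarrow> exact_cut_pair M \<zeta> \<xi> \<and>
     (\<forall>\<sigma> \<tau>. exact_cut_pair M \<sigma> \<tau> \<and> {\<sigma>, \<tau>} \<noteq> {\<zeta>, \<xi>} \<longrightarrow> \<not> separates M \<sigma> \<tau> \<zeta> \<xi>)"

end

theory Submission
  imports Defs
begin

text \<open>Every component of M - {\<sigma>, \<tau>} accumulates at both \<sigma> and \<tau>, since otherwise
it would be clopen in the connected complement of a single point. So if \<sigma> and \<tau> separate
\<zeta> from \<xi> and a third component C of M - {\<sigma>, \<tau>} exists, then C \<union> {\<sigma>, \<tau>}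
is a connected set avoiding \<zeta> and \<xi>, and every point of M - {\<zeta>, \<xi>} is joined to it,
because the component of that point in M - {\<sigma>, \<tau>, \<zeta>, \<xi>} accumulates at \<sigma> or \<tau>.
Thus {\<zeta>, \<xi>} is not a cut pair, which is (2). Separation of cut pairs is symmetric,
by the same first observation applied to M - {\<zeta>, \<xi>}; so an exact cut pair separating
a multivalent one would be separated by it, contradicting (2), and (1) follows.\<close>

lemma Int_closure_component:
  "C \<in> components S \<Longrightarrow> S \<inter> closure C = C"
  using closedin_component[of C S] closedin_Int_closure_of[of euclidean S C] by simp

lemma closure_component_meets_diff:
  assumes lc: "locally connected M" and "closed K" "K \<subseteq> M" "A \<subseteq> K"
    and conn: "connected (M - A)" and P: "P \<in> components (M - K)" and "K - A \<noteq> {}"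
  shows "closure P \<inter> (K - A) \<noteq> {}"
proof
  assume avoid: "closure P \<inter> (K - A) = {}"
  have PMK: "P \<subseteq> M - K" using P in_components_subset by blast
  have "openin (top_of_set M) (M - K)"
    using \<open>closed K\<close> \<open>K \<subseteq> M\<close> by (intro openin_diff closed_subset) auto
  then have "openin (top_of_set M) P"
    using lc P locally_connected_open_component by blast
  then have "openin (top_of_set (M - A)) P"
    using PMK \<open>A \<subseteq> K\<close> by (auto intro: openin_subset_trans)
  moreover have "(M - A) \<inter> closure P = P"
    using avoid Int_closure_component[OF P] PMK \<open>A \<subseteq> K\<close> closure_subset by blast
  then have "closedin (top_of_set (M - A)) P"
    using closedin_Int_closure_of[of euclidean "M - A" P] by simp
  moreover have "P \<noteq> {}" using P in_components_nonempty by blast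
  ultimately have "P = M - A" using conn connected_clopen by blast
  then show False using PMK \<open>K \<subseteq> M\<close> \<open>K - A \<noteq> {}\<close> by blast
qed

lemma in_closure_component_diff_pair:
  fixes M :: "'a::t1_space set"
  assumes lc: "locally connected M" and nc: "\<And>x. connected (M - {x})"
    and "a \<in> M" "b \<in> M" "a \<noteq> b" and D: "D \<in> components (M - {a, b})"
  shows "a \<in> closure D"
  using closure_component_meets_diff[OF lc _ _ _ nc D, of b] assms(3-5) by (auto simp: closed_insert)

lemma connected_Un_pair_component:
  fixes M :: "'a::t1_space set"
  assumes lc: "locally connected M" and nc: "\<And>x. connected (M - {x})"
    and "a \<in> M" "b \<in> M" "a \<noteq> b" and D: "D \<in> components (M - {a, b})"
  shows "connected (D \<union> {a, b})"
proof (rule connected_intermediate_closure)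
  show "connected D" using D in_components_connected by blast
  have "{a, b} \<subseteq> closure D"
    using in_closure_component_diff_pair[OF lc nc, of a b D]
      in_closure_component_diff_pair[OF lc nc, of b a D] assms(3-6)
    by (auto simp: insert_commute)
  then show "D \<union> {a, b} \<subseteq> closure D" using closure_subset by blast
qed auto

lemma connected_diff_singleton_if_not_cut_point:
  assumes "connected M" "\<not> cut_point M x"
  shows "connected (M - {x})"
  using assms by (cases "x \<in> M") (auto simp: cut_point_def)

lemma exists_component_avoiding:
  assumes "finite (components S)" "3 \<le> card (components S)"
  obtains C where "C \<in> components S" "a \<notin> C" "b \<notin> C"
proof -
  have "\<not> components S \<subseteq> {connected_component_set S a, connected_component_set S b}"
  proof
    assume "components S \<subseteq> {connected_component_set S a, connected_component_set S b}"
    then have "card (components S) \<le> card {connected_component_set S a, connected_component_set S b}"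
      by (intro card_mono) auto
    also have "\<dots> \<le> 2" by (simp add: card_insert_le_m1)
    finally show False using assms(2) by simp
  qed
  then obtain C where C: "C \<in> components S"
      "C \<noteq> connected_component_set S a" "C \<noteq> connected_component_set S b"
    by blast
  have "y \<notin> C" if "C \<noteq> connected_component_set S y" for y
    using C(1) that by (metis components_iff connected_component_eq)
  then show ?thesis using that C by blast
qed

lemma separates_sym:
  assumes lc: "locally connected M" and nc: "\<And>x. connected (M - {x})"
    and "cut_pair M \<sigma> \<tau>" "cut_pair M \<zeta> \<xi>" and sep: "separates M \<sigma> \<tau> \<zeta> \<xi>"
  shows "separates M \<zeta> \<xi> \<sigma> \<tau>"
proof -
  define S where "S = M - {\<zeta>, \<xi>}"
  have pair: "\<zeta> \<in> M" "\<xi> \<in> M" "\<zeta> \<noteq> \<xi>" and "\<not> connected S"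
    using \<open>cut_pair M \<zeta> \<xi>\<close> by (auto simp: cut_pair_def S_def)
  have in_S: "\<sigma> \<in> S" "\<tau> \<in> S"
    using sep \<open>cut_pair M \<sigma> \<tau>\<close> by (auto simp: separates_def cut_pair_def S_def)
  have "connected_component_set S \<sigma> \<noteq> connected_component_set S \<tau>"
  proof
    assume same: "connected_component_set S \<sigma> = connected_component_set S \<tau>"
    obtain y where y: "y \<in> S" "y \<notin> connected_component_set S \<sigma>"
      using \<open>\<not> connected S\<close> connected_connected_component connected_component_subset
      by (metis subsetI subset_antisym)
    define D where "D = connected_component_set S y"
    have D: "D \<in> components S" using y by (simp add: D_def componentsI)
    have "y \<in> D" using y by (simp add: D_def)
    then have "\<sigma> \<notin> D" "\<tau> \<notin> D"
      using y same connected_component_eq D_def by metis+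
    then have "D \<union> {\<zeta>, \<xi>} \<subseteq> M - {\<sigma>, \<tau>}"
      using D in_components_subset sep unfolding S_def separates_def by fastforce
    moreover have "connected (D \<union> {\<zeta>, \<xi>})"
      using connected_Un_pair_component[OF lc nc pair] D S_def by blast
    ultimately have "\<xi> \<in> connected_component_set (M - {\<sigma>, \<tau>}) \<zeta>"
      using connected_component_maximal[of \<zeta> "D \<union> {\<zeta>, \<xi>}"] by auto
    then show False using sep connected_component_eq unfolding separates_def by metis
  qed
  then show ?thesis using in_S by (simp add: separates_def S_def)
qed

lemma closure_component_meets_separating_pair:
  fixes M :: "'a::metric_space set"
  assumes lc: "locally connected M" and nc: "\<And>x. connected (M - {x})"
    and "\<sigma> \<in> M" "\<tau> \<in> M" and sep: "separates M \<sigma> \<tau> \<zeta> \<xi>"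
    and P: "P \<in> components (M - {\<sigma>, \<tau>, \<zeta>, \<xi>})"
  shows "\<sigma> \<in> closure P \<or> \<tau> \<in> closure P"
proof -
  define S where "S = M - {\<sigma>, \<tau>}"
  have not_both: "\<not> (\<zeta> \<in> closure P \<and> \<xi> \<in> closure P)"
  proof
    assume both: "\<zeta> \<in> closure P \<and> \<xi> \<in> closure P"
    obtain x where "x \<in> P" using P in_components_nonempty by blast
    have "P \<subseteq> S" using P in_components_subset unfolding S_def by blast
    define C where "C = connected_component_set S x"
    have C: "C \<in> components S"
      using \<open>x \<in> P\<close> \<open>P \<subseteq> S\<close> by (auto simp: C_def componentsI)
    have "P \<subseteq> C"
      unfolding C_def using \<open>x \<in> P\<close> P \<open>P \<subseteq> S\<close>
      by (intro connected_component_maximal) (auto intro: in_components_connected)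
    then have "\<zeta> \<in> C" "\<xi> \<in> C"
      using both sep Int_closure_component[OF C] closure_mono[of P C]
      unfolding separates_def S_def by blast+
    then show False using sep connected_component_eq unfolding separates_def S_def C_def by metis
  qed
  have meets: "closure P \<inter> ({\<sigma>, \<tau>, \<zeta>, \<xi>} - {\<eta>}) \<noteq> {}" if "\<eta> \<in> {\<zeta>, \<xi>}" for \<eta>
    using that sep assms(3,4)
    by (intro closure_component_meets_diff[OF lc _ _ _ nc P]) (auto simp: separates_def closed_insert)
  show ?thesis
    using meets[of \<zeta>] meets[of \<xi>] not_both by blast
qed

lemma connected_diff_separated_pair:
  fixes M :: "'a::metric_space set"
  assumes lc: "locally connected M" and nc: "\<And>x. connected (M - {x})"
    and pair: "\<sigma> \<in> M" "\<tau> \<in> M" "\<sigma> \<noteq> \<tau>" and sep: "separates M \<sigma> \<tau> \<zeta> \<xi>"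
    and C: "C \<in> components (M - {\<sigma>, \<tau>})" "\<zeta> \<notin> C" "\<xi> \<notin> C"
  shows "connected (M - {\<zeta>, \<xi>})"
proof -
  define T where "T = M - {\<zeta>, \<xi>}"
  define B where "B = C \<union> {\<sigma>, \<tau>}"
  have "connected B" using connected_Un_pair_component[OF lc nc pair C(1)] B_def by blast
  have "\<zeta> \<in> M - {\<sigma>, \<tau>}" "\<xi> \<in> M - {\<sigma>, \<tau>}" using sep by (simp_all add: separates_def)
  then have "B \<subseteq> T"
    using C pair in_components_subset[OF C(1)] unfolding B_def T_def by blast
  have "\<sigma> \<in> B" by (simp add: B_def)
  have B_sub: "B \<subseteq> connected_component_set T \<sigma>"
    using connected_component_maximal[OF \<open>\<sigma> \<in> B\<close> \<open>connected B\<close> \<open>B \<subseteq> T\<close>] .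
  have "x \<in> connected_component_set T \<sigma>" if "x \<in> T" for x
  proof (cases "x \<in> {\<sigma>, \<tau>}")
    case True
    then show ?thesis using B_sub unfolding B_def by blast
  next
    case False
    define P where "P = connected_component_set (M - {\<sigma>, \<tau>, \<zeta>, \<xi>}) x"
    have "x \<in> M - {\<sigma>, \<tau>, \<zeta>, \<xi>}" using that False by (auto simp: T_def)
    then have P: "P \<in> components (M - {\<sigma>, \<tau>, \<zeta>, \<xi>})" "x \<in> P"
      by (auto simp: P_def componentsI)
    obtain w where w: "w \<in> {\<sigma>, \<tau>}" "w \<in> closure P"
      using closure_component_meets_separating_pair[OF lc nc pair(1,2) sep P(1)] by blast
    have "connected P" using P(1) in_components_connected by blast
    moreover have "P \<union> {w} \<subseteq> closure P" using w(2) closure_subset by blast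
    ultimately have "connected (P \<union> {w})"
      using connected_intermediate_closure[of P "P \<union> {w}"] by blast
    moreover have "w \<in> B" using w(1) by (auto simp: B_def)
    ultimately have "connected (P \<union> {w} \<union> B)"
      using connected_Un[of "P \<union> {w}" B] \<open>connected B\<close> by blast
    moreover have "P \<union> {w} \<union> B \<subseteq> T"
      using in_components_subset[OF P(1)] \<open>B \<subseteq> T\<close> w unfolding T_def B_def by blast
    ultimately show ?thesis
      using connected_component_maximal[of \<sigma> "P \<union> {w} \<union> B" T] \<open>\<sigma> \<in> B\<close> P(2) by blast
  qed
  then have "connected_component_set T \<sigma> = T" using connected_component_subset by blast
  then show ?thesis by (metis T_def connected_connected_component)
qed

lemma multivalent_exact_cut_pair_components:
  assumes "multivalent_exact_cut_pair M \<sigma> \<tau>"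
  shows "finite (components (M - {\<sigma>, \<tau>}))" "3 \<le> card (components (M - {\<sigma>, \<tau>}))"
proof -
  have "num_components (M - {\<sigma>, \<tau>}) \<noteq> \<infinity> \<and> 3 \<le> num_components (M - {\<sigma>, \<tau>})"
    using assms unfolding multivalent_exact_cut_pair_def exact_cut_pair_def by metis
  then show "finite (components (M - {\<sigma>, \<tau>}))" "3 \<le> card (components (M - {\<sigma>, \<tau>}))"
    by (simp_all add: num_components_def split: if_splits)
qed

lemma multivalent_exact_cut_pair_not_separates:
  fixes M :: "'a::metric_space set"
  assumes lc: "locally connected M" and nc: "\<And>x. connected (M - {x})"
    and mv: "multivalent_exact_cut_pair M \<sigma> \<tau>" and "cut_pair M \<zeta> \<xi>"
  shows "\<not> separates M \<sigma> \<tau> \<zeta> \<xi>"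
proof
  assume sep: "separates M \<sigma> \<tau> \<zeta> \<xi>"
  have pair: "\<sigma> \<in> M" "\<tau> \<in> M" "\<sigma> \<noteq> \<tau>"
    using mv by (auto simp: multivalent_exact_cut_pair_def exact_cut_pair_def cut_pair_def)
  obtain C where C: "C \<in> components (M - {\<sigma>, \<tau>})" "\<zeta> \<notin> C" "\<xi> \<notin> C"
    using exists_component_avoiding multivalent_exact_cut_pair_components[OF mv] by metis
  have "connected (M - {\<zeta>, \<xi>})"
    using connected_diff_separated_pair[OF lc nc pair sep C] .
  then show False using \<open>cut_pair M \<zeta> \<xi>\<close> by (simp add: cut_pair_def)
qed

theorem lemma2p6:
  fixes M :: "'a::metric_space set"
  assumes "peano_continuum M"
    and "\<forall>\<eta>. \<not> cut_point M \<eta>"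
  shows "(\<forall>\<zeta> \<xi>. multivalent_exact_cut_pair M \<zeta> \<xi> \<longrightarrow> inseparable M \<zeta> \<xi>)
       \<and> (\<forall>\<sigma> \<tau> \<zeta> \<xi>. multivalent_exact_cut_pair M \<sigma> \<tau> \<and> cut_pair M \<zeta> \<xi>
            \<longrightarrow> \<not> separates M \<sigma> \<tau> \<zeta> \<xi>)"
proof -
  have lc: "locally connected M" and "connected M"
    using assms(1) by (auto simp: peano_continuum_def)
  then have nc: "connected (M - {x})" for x
    using assms(2) connected_diff_singleton_if_not_cut_point by blast
  have part2: "\<not> separates M \<sigma> \<tau> \<zeta> \<xi>"
    if "multivalent_exact_cut_pair M \<sigma> \<tau>" "cut_pair M \<zeta> \<xi>" for \<sigma> \<tau> \<zeta> \<xi>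
    using multivalent_exact_cut_pair_not_separates[OF lc nc that] .
  have "inseparable M \<zeta> \<xi>" if mv: "multivalent_exact_cut_pair M \<zeta> \<xi>" for \<zeta> \<xi>
  proof -
    have "exact_cut_pair M \<zeta> \<xi>" "cut_pair M \<zeta> \<xi>"
      using mv by (auto simp: multivalent_exact_cut_pair_def exact_cut_pair_def)
    moreover have "\<not> separates M \<sigma> \<tau> \<zeta> \<xi>" if "exact_cut_pair M \<sigma> \<tau>" for \<sigma> \<tau>
    proof -
      have "cut_pair M \<sigma> \<tau>" using that by (simp add: exact_cut_pair_def)
      then show ?thesis
        using separates_sym[OF lc nc _ \<open>cut_pair M \<zeta> \<xi>\<close>] part2[OF mv] by blast
    qed
    ultimately show ?thesis by (simp add: inseparable_def)
  qed
  with part2 show ?thesis by blast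
qed

end
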